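(* Let $R$ be a $*$-ring and $P(R)$ its prime radical. Then $R$ is strongly $J$-$*$-clean if and only if $R$ is abelian and $R/P(R)$, with the induced involution $(a+P(R))^*=a^*+P(R)$, is strongly $J$-$*$-clean.
   Context: All rings are associative with identity. A $*$-ring is a ring $R$ with an involution $*$, i.e. a map $a\mapsto a^*$ with $(a+b)^*=a^*+b^*$, $(ab)^*=b^*a^*$, $(a^* )^*=a$. The prime radical $P(R)$ is the intersection of all prime ideals of $R$; it satisfies $P(R)^*\subseteq P(R)$, so $R/P(R)$ inherits an involution. $J(S)$ denotes the Jacobson radical of a ring $S$. A projection is an element $e$ with $e^2=e=e^*$. A $*$-ring $S$ is strongly $J$-$*$-clean if every $a\in S$ can be written $a=e+u$ with $e$ a projection, $u\in J(S)$ and $ae=ea$. A ring is abelian if all its idempotents are central. *)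

theory Defs
  imports "HOL-Algebra.Algebra"
begin

definition star_ring :: "('a, 'b) ring_scheme \<Rightarrow> ('a \<Rightarrow> 'a) \<Rightarrow> bool" where
  "star_ring R s \<longleftrightarrow> ring R \<and>
     (\<forall>a \<in> carrier R. s a \<in> carrier R) \<and>
     (\<forall>a \<in> carrier R. \<forall>b \<in> carrier R. s (a \<oplus>\<^bsub>R\<^esub> b) = s a \<oplus>\<^bsub>R\<^esub> s b) \<and>
     (\<forall>a \<in> carrier R. \<forall>b \<in> carrier R. s (a \<otimes>\<^bsub>R\<^esub> b) = s b \<otimes>\<^bsub>R\<^esub> s a) \<and>
     (\<forall>a \<in> carrier R. s (s a) = a)"

definition nc_prime_ideal :: "('a, 'b) ring_scheme \<Rightarrow> 'a set \<Rightarrow> bool" where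
  "nc_prime_ideal R P \<longleftrightarrow> ideal P R \<and> P \<noteq> carrier R \<and>
     (\<forall>A B. ideal A R \<longrightarrow> ideal B R \<longrightarrow> ideal_prod R A B \<subseteq> P \<longrightarrow> A \<subseteq> P \<or> B \<subseteq> P)"

text \<open>The prime radical: intersection of all prime ideals (the whole ring if there are none).\<close>
definition prime_radical :: "('a, 'b) ring_scheme \<Rightarrow> 'a set" where
  "prime_radical R = carrier R \<inter> \<Inter> {P. nc_prime_ideal R P}"

definition left_ideal :: "('a, 'b) ring_scheme \<Rightarrow> 'a set \<Rightarrow> bool" where
  "left_ideal R L \<longleftrightarrow> additive_subgroup L R \<and>
     (\<forall>r \<in> carrier R. \<forall>x \<in> L. r \<otimes>\<^bsub>R\<^esub> x \<in> L)"

definition maximal_left_ideal :: "('a, 'b) ring_scheme \<Rightarrow> 'a set \<Rightarrow> bool" where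
  "maximal_left_ideal R L \<longleftrightarrow> left_ideal R L \<and> L \<noteq> carrier R \<and>
     (\<forall>L'. left_ideal R L' \<longrightarrow> L \<subseteq> L' \<longrightarrow> L' = L \<or> L' = carrier R)"

definition jacobson_radical :: "('a, 'b) ring_scheme \<Rightarrow> 'a set" where
  "jacobson_radical R = carrier R \<inter> \<Inter> {L. maximal_left_ideal R L}"

definition is_projection :: "('a, 'b) ring_scheme \<Rightarrow> ('a \<Rightarrow> 'a) \<Rightarrow> 'a \<Rightarrow> bool" where
  "is_projection R s e \<longleftrightarrow> e \<in> carrier R \<and> e \<otimes>\<^bsub>R\<^esub> e = e \<and> s e = e"

definition strongly_J_star_clean :: "('a, 'b) ring_scheme \<Rightarrow> ('a \<Rightarrow> 'a) \<Rightarrow> bool" where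
  "strongly_J_star_clean R s \<longleftrightarrow>
     (\<forall>a \<in> carrier R. \<exists>e u. is_projection R s e \<and> u \<in> jacobson_radical R \<and>
        a = e \<oplus>\<^bsub>R\<^esub> u \<and> a \<otimes>\<^bsub>R\<^esub> e = e \<otimes>\<^bsub>R\<^esub> a)"

definition abelian_ring :: "('a, 'b) ring_scheme \<Rightarrow> bool" where
  "abelian_ring R \<longleftrightarrow> (\<forall>e \<in> carrier R. e \<otimes>\<^bsub>R\<^esub> e = e \<longrightarrow>
     (\<forall>x \<in> carrier R. e \<otimes>\<^bsub>R\<^esub> x = x \<otimes>\<^bsub>R\<^esub> e))"

definition quot_star :: "('a, 'b) ring_scheme \<Rightarrow> ('a \<Rightarrow> 'a) \<Rightarrow> 'a set \<Rightarrow> 'a set \<Rightarrow> 'a set" where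
  "quot_star R s N Y = a_r_coset R N (s (SOME x. x \<in> Y))"

end

theory Submission
  imports Defs
begin

text \<open>
  If \<open>R\<close> is strongly J-*-clean, write an idempotent \<open>g\<close> as \<open>e + u\<close> with \<open>e\<close> a projection
  commuting with \<open>g\<close> and \<open>u \<in> J(R)\<close>; commuting idempotents that differ by an element of
  \<open>J(R)\<close> coincide, so \<open>g = e\<close> and every idempotent is self-adjoint. Then for idempotent \<open>g\<close>
  the idempotent \<open>g + g x (1 - g)\<close> is self-adjoint, which forces \<open>g x (1 - g) = 0\<close>; by
  symmetry \<open>(1 - g) x g = 0\<close>, so \<open>R\<close> is abelian. Decompositions pass to \<open>R/P(R)\<close> because
  surjective homomorphisms map \<open>J\<close> into \<open>J\<close>.

  Conversely, \<open>P(R)\<close> is a nil ideal (an ideal maximal among those avoiding the powers of \<open>x\<close>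
  is prime), hence \<open>P(R) \<subseteq> J(R)\<close>, and idempotents lift modulo nil ideals via the iteration
  \<open>t \<mapsto> 3 t\<^sup>2 - 2 t\<^sup>3\<close>, which squares the defect \<open>t\<^sup>2 - t\<close> up to a factor. Lift the
  projection of \<open>a + P(R)\<close> to an idempotent \<open>e\<close>; then \<open>e\<^sup>*\<close> is an idempotent commuting
  with \<open>e\<close> (as \<open>R\<close> is abelian) and congruent to it modulo \<open>J(R)\<close>, so \<open>e\<^sup>* = e\<close>, and
  \<open>a - e \<in> J(R)\<close> because \<open>J\<close> pulls back along a surjection whose kernel lies in \<open>J\<close>.
\<close>

context ring
begin

lemma r_distr_minus:
  "x \<in> carrier R \<Longrightarrow> y \<in> carrier R \<Longrightarrow> z \<in> carrier R \<Longrightarrow> x \<otimes> (y \<ominus> z) = x \<otimes> y \<ominus> x \<otimes> z"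
  by (simp add: a_minus_def r_distr r_minus)

lemma l_distr_minus:
  "x \<in> carrier R \<Longrightarrow> y \<in> carrier R \<Longrightarrow> z \<in> carrier R \<Longrightarrow> (y \<ominus> z) \<otimes> x = y \<otimes> x \<ominus> z \<otimes> x"
  by (simp add: a_minus_def l_distr l_minus)

lemma minus_eq_zero_iff: "x \<in> carrier R \<Longrightarrow> y \<in> carrier R \<Longrightarrow> x \<ominus> y = \<zero> \<longleftrightarrow> x = y"
  by (metis a_minus_def add.inv_closed minus_equality minus_minus r_neg)

lemma minus_self: "x \<in> carrier R \<Longrightarrow> x \<ominus> x = \<zero>"
  by (simp add: a_minus_def r_neg)

lemma minus_zero_right: "x \<in> carrier R \<Longrightarrow> x \<ominus> \<zero> = x"
  by (simp add: a_minus_def)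

lemma minus_add_minus:
  "x \<in> carrier R \<Longrightarrow> y \<in> carrier R \<Longrightarrow> z \<in> carrier R \<Longrightarrow> (x \<ominus> y) \<oplus> (y \<ominus> z) = x \<ominus> z"
  by (simp add: a_minus_def a_assoc r_neg1)

lemma minus_minus_cancel: "x \<in> carrier R \<Longrightarrow> y \<in> carrier R \<Longrightarrow> x \<ominus> (x \<ominus> y) = y"
  by (simp add: a_minus_def minus_add r_neg2)

lemma add_minus_cancel_left: "x \<in> carrier R \<Longrightarrow> y \<in> carrier R \<Longrightarrow> (x \<oplus> y) \<ominus> x = y"
  by (simp add: a_minus_def a_comm r_neg1)

lemma one_minus_idempotent:
  assumes "e \<in> carrier R" "e \<otimes> e = e"
  shows "(\<one> \<ominus> e) \<otimes> (\<one> \<ominus> e) = \<one> \<ominus> e"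
proof -
  have "(\<one> \<ominus> e) \<otimes> e = \<zero>"
    using assms by (simp add: l_distr_minus minus_self)
  then show ?thesis
    using assms(1) by (simp add: r_distr_minus minus_zero_right)
qed

lemma commuting_idempotents_mult_idempotent:
  assumes "a \<in> carrier R" "a \<otimes> a = a" "b \<in> carrier R" "b \<otimes> b = b" "a \<otimes> b = b \<otimes> a"
  shows "(a \<otimes> b) \<otimes> (a \<otimes> b) = a \<otimes> b"
proof -
  have "(a \<otimes> b) \<otimes> (a \<otimes> b) = a \<otimes> (b \<otimes> a) \<otimes> b"
    using assms(1,3) by (simp add: m_assoc)
  also have "\<dots> = a \<otimes> (a \<otimes> b) \<otimes> b"
    using assms(5) by simp
  also have "\<dots> = (a \<otimes> a) \<otimes> (b \<otimes> b)"
    using assms(1,3) by (simp add: m_assoc)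
  finally show ?thesis
    using assms(2,4) by simp
qed

lemma left_idealI:
  assumes "L \<subseteq> carrier R" "\<zero> \<in> L" "\<And>x y. x \<in> L \<Longrightarrow> y \<in> L \<Longrightarrow> x \<oplus> y \<in> L"
    "\<And>x. x \<in> L \<Longrightarrow> \<ominus> x \<in> L" "\<And>r x. r \<in> carrier R \<Longrightarrow> x \<in> L \<Longrightarrow> r \<otimes> x \<in> L"
  shows "left_ideal R L"
  unfolding left_ideal_def
proof (intro conjI ballI additive_subgroupI)
  show "subgroup L (add_monoid R)"
    using assms(1-4) by (intro add.subgroupI) (auto simp: a_inv_def)
qed (use assms(5) in blast)

lemma
  assumes "left_ideal R L"
  shows left_ideal_subset: "L \<subseteq> carrier R"
    and left_ideal_zero: "\<zero> \<in> L"
    and left_ideal_add: "\<And>x y. x \<in> L \<Longrightarrow> y \<in> L \<Longrightarrow> x \<oplus> y \<in> L"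
    and left_ideal_a_inv: "\<And>x. x \<in> L \<Longrightarrow> \<ominus> x \<in> L"
    and left_ideal_l_closed: "\<And>r x. r \<in> carrier R \<Longrightarrow> x \<in> L \<Longrightarrow> r \<otimes> x \<in> L"
proof -
  interpret additive_subgroup L R
    using assms by (simp add: left_ideal_def)
  show "L \<subseteq> carrier R" "\<zero> \<in> L" "\<And>x y. x \<in> L \<Longrightarrow> y \<in> L \<Longrightarrow> x \<oplus> y \<in> L"
    "\<And>x. x \<in> L \<Longrightarrow> \<ominus> x \<in> L"
    using a_subset by auto
  show "\<And>r x. r \<in> carrier R \<Longrightarrow> x \<in> L \<Longrightarrow> r \<otimes> x \<in> L"
    using assms by (simp add: left_ideal_def)
qed

lemma left_ideal_one_imp_carrier: "left_ideal R L \<Longrightarrow> \<one> \<in> L \<Longrightarrow> L = carrier R"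
  using left_ideal_subset left_ideal_l_closed[of L _ \<one>] by force

lemma left_ideal_add_left_multiples:
  assumes L: "left_ideal R L" and c: "c \<in> carrier R"
  shows "left_ideal R {l \<oplus> r \<otimes> c | l r. l \<in> L \<and> r \<in> carrier R}" (is "left_ideal R ?M")
proof (rule left_idealI)
  note L_carr = left_ideal_subset[OF L, THEN subsetD]
  show "?M \<subseteq> carrier R"
    using c L_carr by auto
  show "\<zero> \<in> ?M"
    using c left_ideal_zero[OF L] by (auto intro!: exI[of _ \<zero>])
  show "x \<oplus> y \<in> ?M" if x: "x \<in> ?M" and y: "y \<in> ?M" for x y
  proof -
    obtain l r l' r' where "l \<in> L" "l' \<in> L" "r \<in> carrier R" "r' \<in> carrier R"
      and "x = l \<oplus> r \<otimes> c" "y = l' \<oplus> r' \<otimes> c"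
      using x y by blast
    moreover from this have "x \<oplus> y = (l \<oplus> l') \<oplus> (r \<oplus> r') \<otimes> c"
      using c L_carr by (simp add: l_distr a_ac)
    ultimately show ?thesis
      using left_ideal_add[OF L] by blast
  qed
  show "\<ominus> x \<in> ?M" if x: "x \<in> ?M" for x
  proof -
    obtain l r where "l \<in> L" "r \<in> carrier R" "x = l \<oplus> r \<otimes> c"
      using x by blast
    moreover from this have "\<ominus> x = \<ominus> l \<oplus> (\<ominus> r) \<otimes> c"
      using c L_carr by (simp add: minus_add l_minus)
    ultimately show ?thesis
      using left_ideal_a_inv[OF L] by blast
  qed
  show "t \<otimes> x \<in> ?M" if t: "t \<in> carrier R" and x: "x \<in> ?M" for t x
  proof -
    obtain l r where "l \<in> L" "r \<in> carrier R" "x = l \<oplus> r \<otimes> c"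
      using x by blast
    moreover from this have "t \<otimes> x = t \<otimes> l \<oplus> (t \<otimes> r) \<otimes> c"
      using c L_carr t by (simp add: r_distr m_assoc)
    ultimately show ?thesis
      using t left_ideal_l_closed[OF L] by blast
  qed
qed

lemma left_ideal_zero_set: "left_ideal R {\<zero>}"
  by (rule left_idealI) auto

lemma exists_maximal_left_ideal:
  assumes L: "left_ideal R L" and one: "\<one> \<notin> L"
  shows "\<exists>M. maximal_left_ideal R M \<and> L \<subseteq> M"
proof -
  let ?A = "{M. left_ideal R M \<and> \<one> \<notin> M \<and> L \<subseteq> M}"
  have "\<exists>M\<in>?A. \<forall>U\<in>?A. M \<subseteq> U \<longrightarrow> U = M"
  proof (rule subset_Zorn_nonempty)
    show "?A \<noteq> {}"
      using L one by blast
    show "\<Union>C \<in> ?A" if "C \<noteq> {}" "subset.chain ?A C" for C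
    proof -
      have chain: "C \<subseteq> ?A" "\<And>U V. U \<in> C \<Longrightarrow> V \<in> C \<Longrightarrow> U \<subseteq> V \<or> V \<subseteq> U"
        using that(2) by (auto simp: subset_chain_def)
      have "\<Union>C \<subseteq> carrier R" "\<zero> \<in> \<Union>C"
        using that(1) chain(1) left_ideal_subset left_ideal_zero by blast+
      moreover have "x \<oplus> y \<in> \<Union>C" if x: "x \<in> \<Union>C" and y: "y \<in> \<Union>C" for x y
      proof -
        obtain U V where "U \<in> C" "V \<in> C" "x \<in> U" "y \<in> V"
          using x y by blast
        then show ?thesis
          using chain left_ideal_add by (metis (no_types, lifting) UnionI mem_Collect_eq subsetD)
      qed
      ultimately have "left_ideal R (\<Union>C)"
      proof (rule left_idealI)
        show "\<ominus> x \<in> \<Union>C" if "x \<in> \<Union>C" for x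
          using that chain(1) left_ideal_a_inv by blast
        show "r \<otimes> x \<in> \<Union>C" if "r \<in> carrier R" "x \<in> \<Union>C" for r x
          using that chain(1) left_ideal_l_closed by blast
      qed
      then show ?thesis
        using that(1) chain(1) by blast
    qed
  qed
  then obtain M where M: "M \<in> ?A" and max: "\<forall>U\<in>?A. M \<subseteq> U \<longrightarrow> U = M"
    by (elim bexE)
  have "maximal_left_ideal R M"
    unfolding maximal_left_ideal_def
  proof (intro conjI allI impI)
    show "left_ideal R M" "M \<noteq> carrier R"
      using M by auto
    show "L' = M \<or> L' = carrier R" if L': "left_ideal R L'" "M \<subseteq> L'" for L'
    proof (cases "\<one> \<in> L'")
      case True
      then show ?thesis
        using L'(1) left_ideal_one_imp_carrier by blast
    next
      case False
      then have "L' \<in> ?A"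
        using L' M by blast
      then show ?thesis
        using L'(2) max by blast
    qed
  qed
  then show ?thesis
    using M by blast
qed

lemma jacobson_radical_subset: "jacobson_radical R \<subseteq> carrier R"
  by (auto simp: jacobson_radical_def)

lemma jacobson_radical_l_closed:
  assumes v: "v \<in> jacobson_radical R" and r: "r \<in> carrier R"
  shows "r \<otimes> v \<in> jacobson_radical R"
  using assms jacobson_radical_subset left_ideal_l_closed
  by (auto simp: jacobson_radical_def maximal_left_ideal_def)

lemma jacobson_radical_a_inv: "v \<in> jacobson_radical R \<Longrightarrow> \<ominus> v \<in> jacobson_radical R"
  using jacobson_radical_l_closed[of v "\<ominus> \<one>"] jacobson_radical_subset by (auto simp: l_minus)

lemma one_minus_jacobson_left_invertible:
  assumes v: "v \<in> jacobson_radical R"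
  shows "\<exists>w\<in>carrier R. w \<otimes> (\<one> \<ominus> v) = \<one>"
proof (rule ccontr)
  assume no_inverse: "\<not> ?thesis"
  have v_carr: "v \<in> carrier R"
    using v jacobson_radical_subset by blast
  let ?L = "{l \<oplus> r \<otimes> (\<one> \<ominus> v) | l r. l \<in> {\<zero>} \<and> r \<in> carrier R}"
  have "left_ideal R ?L"
    using left_ideal_add_left_multiples[OF left_ideal_zero_set] v_carr by simp
  moreover have "\<one> \<notin> ?L"
    using no_inverse v_carr by auto
  ultimately obtain M where M: "maximal_left_ideal R M" "?L \<subseteq> M"
    using exists_maximal_left_ideal by blast
  have "\<one> \<ominus> v \<in> M"
    using M(2) v_carr by (force intro!: exI[of _ \<one>])
  moreover have "v \<in> M"
    using v M(1) by (simp add: jacobson_radical_def)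
  ultimately have "(\<one> \<ominus> v) \<oplus> v \<in> M"
    using M(1) left_ideal_add by (simp add: maximal_left_ideal_def)
  then have "\<one> \<in> M"
    using v_carr by (simp add: a_minus_def a_assoc l_neg)
  then show False
    using M(1) left_ideal_one_imp_carrier unfolding maximal_left_ideal_def by blast
qed

lemma jacobson_radical_iff:
  "v \<in> jacobson_radical R \<longleftrightarrow>
     v \<in> carrier R \<and> (\<forall>r\<in>carrier R. \<exists>w\<in>carrier R. w \<otimes> (\<one> \<ominus> r \<otimes> v) = \<one>)"
proof
  assume "v \<in> jacobson_radical R"
  then show "v \<in> carrier R \<and> (\<forall>r\<in>carrier R. \<exists>w\<in>carrier R. w \<otimes> (\<one> \<ominus> r \<otimes> v) = \<one>)"
    using jacobson_radical_subset jacobson_radical_l_closed one_minus_jacobson_left_invertible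
    by blast
next
  assume v: "v \<in> carrier R \<and> (\<forall>r\<in>carrier R. \<exists>w\<in>carrier R. w \<otimes> (\<one> \<ominus> r \<otimes> v) = \<one>)"
  have "v \<in> L" if L: "maximal_left_ideal R L" for L
  proof (rule ccontr)
    assume "v \<notin> L"
    have L_left: "left_ideal R L"
      and L_max: "\<And>L'. left_ideal R L' \<Longrightarrow> L \<subseteq> L' \<Longrightarrow> L' = L \<or> L' = carrier R"
      using L by (auto simp: maximal_left_ideal_def)
    let ?L' = "{l \<oplus> r \<otimes> v | l r. l \<in> L \<and> r \<in> carrier R}"
    have "L \<subseteq> ?L'"
    proof
      fix l assume "l \<in> L"
      moreover from this have "l = l \<oplus> \<zero> \<otimes> v"
        using left_ideal_subset[OF L_left] v by auto
      ultimately show "l \<in> ?L'"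
        by blast
    qed
    moreover have "v = \<zero> \<oplus> \<one> \<otimes> v"
      using v by simp
    then have "v \<in> ?L'"
      using left_ideal_zero[OF L_left] by blast
    ultimately have "?L' = carrier R"
      using L_max[OF left_ideal_add_left_multiples[OF L_left]] v \<open>v \<notin> L\<close> by blast
    then obtain l r where l: "l \<in> L" and r: "r \<in> carrier R" and one: "\<one> = l \<oplus> r \<otimes> v"
      using one_closed by blast
    have l_carr: "l \<in> carrier R"
      using l left_ideal_subset[OF L_left] by blast
    have "l = (l \<oplus> r \<otimes> v) \<ominus> r \<otimes> v"
      using l_carr r v by (simp add: a_minus_def a_assoc r_neg)
    then have "l = \<one> \<ominus> r \<otimes> v"
      using one by simp
    moreover obtain w where "w \<in> carrier R" "w \<otimes> (\<one> \<ominus> r \<otimes> v) = \<one>"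
      using v r by blast
    ultimately have "\<one> \<in> L"
      using left_ideal_l_closed[OF L_left _ l] by metis
    then show False
      using L left_ideal_one_imp_carrier unfolding maximal_left_ideal_def by blast
  qed
  then show "v \<in> jacobson_radical R"
    using v by (simp add: jacobson_radical_def)
qed

lemma jacobson_radical_idempotent_eq_zero:
  assumes p: "p \<in> jacobson_radical R" and idem: "p \<otimes> p = p"
  shows "p = \<zero>"
proof -
  have p_carr: "p \<in> carrier R"
    using p jacobson_radical_subset by blast
  obtain w where w: "w \<in> carrier R" "w \<otimes> (\<one> \<ominus> p) = \<one>"
    using one_minus_jacobson_left_invertible[OF p] by blast
  have "(\<one> \<ominus> p) \<otimes> p = \<zero>"
    using p_carr by (simp add: l_distr_minus idem minus_self)
  then have "(w \<otimes> (\<one> \<ominus> p)) \<otimes> p = \<zero>"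
    using p_carr w(1) by (simp add: m_assoc)
  then show ?thesis
    using p_carr w(2) by simp
qed

lemma nilpotent_one_minus_left_invertible:
  assumes y: "y \<in> carrier R" and nil: "y [^] (n::nat) = \<zero>"
  shows "\<exists>w\<in>carrier R. w \<otimes> (\<one> \<ominus> y) = \<one>"
proof -
  have "\<exists>w\<in>carrier R. w \<otimes> (\<one> \<ominus> y) = \<one> \<ominus> y [^] k" for k :: nat
  proof (induction k)
    case 0
    then show ?case
      by (intro bexI[of _ \<zero>]) (simp_all add: y a_minus_def r_neg)
  next
    case (Suc k)
    then obtain w where w: "w \<in> carrier R" "w \<otimes> (\<one> \<ominus> y) = \<one> \<ominus> y [^] k"
      by blast
    have y_pow: "y [^] k \<otimes> (\<one> \<ominus> y) = y [^] k \<ominus> y [^] Suc k"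
      using y by (simp add: r_distr_minus)
    have "(w \<oplus> y [^] k) \<otimes> (\<one> \<ominus> y) = w \<otimes> (\<one> \<ominus> y) \<oplus> y [^] k \<otimes> (\<one> \<ominus> y)"
      using y w(1) by (simp add: l_distr)
    also have "\<dots> = (\<one> \<ominus> y [^] k) \<oplus> (y [^] k \<ominus> y [^] Suc k)"
      by (simp only: w(2) y_pow)
    also have "\<dots> = \<one> \<ominus> y [^] Suc k"
      using y by (simp add: minus_add_minus del: nat_pow_Suc)
    finally show ?case
      using y w(1) by (intro bexI[of _ "w \<oplus> y [^] k"]) simp_all
  qed
  from this[of n] show ?thesis
    using nil by (simp add: a_minus_def)
qed

lemma nil_ideal_subset_jacobson_radical:
  assumes I: "ideal I R" and nil: "\<And>y. y \<in> I \<Longrightarrow> \<exists>n::nat. y [^] n = \<zero>"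
  shows "I \<subseteq> jacobson_radical R"
proof
  fix v assume v: "v \<in> I"
  interpret ideal I R by (rule I)
  show "v \<in> jacobson_radical R"
    unfolding jacobson_radical_iff
  proof (intro conjI ballI)
    show "v \<in> carrier R"
      using v a_subset by blast
    show "\<exists>w\<in>carrier R. w \<otimes> (\<one> \<ominus> r \<otimes> v) = \<one>" if "r \<in> carrier R" for r
      using nil[OF I_l_closed[OF v that]] nilpotent_one_minus_left_invertible v that a_subset
      by blast
  qed
qed

lemma idempotent_eq_mult_if_diff_in_jacobson_radical:
  assumes g: "g \<in> carrier R" "g \<otimes> g = g" and e: "e \<in> carrier R" "e \<otimes> e = e"
    and comm: "g \<otimes> e = e \<otimes> g" and diff: "g \<ominus> e \<in> jacobson_radical R"
  shows "g = g \<otimes> e"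
proof -
  have "g \<otimes> (g \<ominus> e) = g \<otimes> (\<one> \<ominus> e)"
    using g e by (simp add: r_distr_minus)
  moreover have "(g \<otimes> (\<one> \<ominus> e)) \<otimes> (g \<otimes> (\<one> \<ominus> e)) = g \<otimes> (\<one> \<ominus> e)"
    using g e comm
    by (intro commuting_idempotents_mult_idempotent one_minus_idempotent)
      (simp_all add: r_distr_minus l_distr_minus)
  ultimately have "g \<otimes> (\<one> \<ominus> e) = \<zero>"
    using jacobson_radical_l_closed[OF diff g(1)] jacobson_radical_idempotent_eq_zero by metis
  then show ?thesis
    using g e by (simp add: r_distr_minus minus_eq_zero_iff)
qed

lemma idempotents_eq_if_diff_in_jacobson_radical:
  assumes g: "g \<in> carrier R" "g \<otimes> g = g" and e: "e \<in> carrier R" "e \<otimes> e = e"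
    and comm: "g \<otimes> e = e \<otimes> g" and diff: "g \<ominus> e \<in> jacobson_radical R"
  shows "g = e"
proof -
  have "e \<ominus> g = \<ominus> (g \<ominus> e)"
    using g e by (simp add: a_minus_def minus_add add.m_comm)
  then have "e \<ominus> g \<in> jacobson_radical R"
    using jacobson_radical_a_inv[OF diff] by simp
  then have "e = e \<otimes> g"
    using idempotent_eq_mult_if_diff_in_jacobson_radical[OF e g comm[symmetric]] by blast
  moreover have "g = g \<otimes> e"
    using idempotent_eq_mult_if_diff_in_jacobson_radical[OF g e comm diff] .
  ultimately show ?thesis
    using comm by simp
qed

end

context ring_hom_ring
begin

lemma hom_minus: "x \<in> carrier R \<Longrightarrow> y \<in> carrier R \<Longrightarrow> h (x \<ominus> y) = h x \<ominus>\<^bsub>S\<^esub> h y"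
  by (simp add: a_minus_def)

lemma jacobson_radical_image:
  assumes surj: "h ` carrier R = carrier S" and u: "u \<in> jacobson_radical R"
  shows "h u \<in> jacobson_radical S"
  unfolding S.jacobson_radical_iff
proof (intro conjI ballI)
  have u_carr: "u \<in> carrier R"
    using u R.jacobson_radical_subset by blast
  then show "h u \<in> carrier S"
    by simp
  fix r' assume "r' \<in> carrier S"
  then obtain r where r: "r \<in> carrier R" "r' = h r"
    using surj by blast
  then obtain w where w: "w \<in> carrier R" "w \<otimes> (\<one> \<ominus> r \<otimes> u) = \<one>"
    using u unfolding R.jacobson_radical_iff by blast
  have "h (w \<otimes> (\<one> \<ominus> r \<otimes> u)) = h w \<otimes>\<^bsub>S\<^esub> (\<one>\<^bsub>S\<^esub> \<ominus>\<^bsub>S\<^esub> r' \<otimes>\<^bsub>S\<^esub> h u)"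
    using r w(1) u_carr by (simp add: hom_minus)
  then have "h w \<otimes>\<^bsub>S\<^esub> (\<one>\<^bsub>S\<^esub> \<ominus>\<^bsub>S\<^esub> r' \<otimes>\<^bsub>S\<^esub> h u) = \<one>\<^bsub>S\<^esub>"
    using w(2) by simp
  then show "\<exists>w'\<in>carrier S. w' \<otimes>\<^bsub>S\<^esub> (\<one>\<^bsub>S\<^esub> \<ominus>\<^bsub>S\<^esub> r' \<otimes>\<^bsub>S\<^esub> h u) = \<one>\<^bsub>S\<^esub>"
    using w(1) hom_closed by blast
qed

lemma jacobson_radical_preimage:
  assumes surj: "h ` carrier R = carrier S"
    and ker: "\<And>x. x \<in> carrier R \<Longrightarrow> h x = \<zero>\<^bsub>S\<^esub> \<Longrightarrow> x \<in> jacobson_radical R"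
    and u: "u \<in> carrier R" "h u \<in> jacobson_radical S"
  shows "u \<in> jacobson_radical R"
  unfolding R.jacobson_radical_iff
proof (intro conjI ballI)
  show "u \<in> carrier R"
    by (rule u(1))
  fix r assume r: "r \<in> carrier R"
  obtain w' where w': "w' \<in> carrier S" "w' \<otimes>\<^bsub>S\<^esub> (\<one>\<^bsub>S\<^esub> \<ominus>\<^bsub>S\<^esub> h r \<otimes>\<^bsub>S\<^esub> h u) = \<one>\<^bsub>S\<^esub>"
    using u(2) r unfolding S.jacobson_radical_iff by (meson hom_closed)
  obtain w where w: "w \<in> carrier R" "w' = h w"
    using w'(1) surj by blast
  define k where "k = \<one> \<ominus> w \<otimes> (\<one> \<ominus> r \<otimes> u)"
  have k_carr: "k \<in> carrier R"
    using r u w by (simp add: k_def)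
  have "h k = \<zero>\<^bsub>S\<^esub>"
    using r u w w' by (simp add: k_def hom_minus S.minus_self)
  then have "k \<in> jacobson_radical R"
    using ker k_carr by blast
  text \<open>\<open>w (1 - r u) = 1 - k\<close> with \<open>k \<in> J(R)\<close>, so it is itself left invertible.\<close>
  then obtain v where v: "v \<in> carrier R" "v \<otimes> (\<one> \<ominus> \<one> \<otimes> k) = \<one>"
    using one_closed unfolding R.jacobson_radical_iff by blast
  have "\<one> \<ominus> k = w \<otimes> (\<one> \<ominus> r \<otimes> u)"
    using r u w by (simp add: k_def R.minus_minus_cancel)
  then have "(v \<otimes> w) \<otimes> (\<one> \<ominus> r \<otimes> u) = \<one>"
    using v w r u k_carr by (simp add: R.m_assoc)
  then show "\<exists>w\<in>carrier R. w \<otimes> (\<one> \<ominus> r \<otimes> u) = \<one>"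
    using v(1) w(1) R.m_closed by blast
qed

end

context ring
begin

lemma prime_radical_ideal: "ideal (prime_radical R) R"
proof (cases "{P. nc_prime_ideal R P} = {}")
  case True
  then show ?thesis
    by (simp add: prime_radical_def oneideal)
next
  case False
  then have "ideal (\<Inter>{P. nc_prime_ideal R P}) R"
    by (intro i_Intersect) (auto simp: nc_prime_ideal_def)
  moreover from this have "\<Inter>{P. nc_prime_ideal R P} \<subseteq> carrier R"
    by (simp add: ideal.axioms(1) additive_subgroup.a_subset)
  ultimately show ?thesis
    by (simp add: prime_radical_def Int_absorb1)
qed

lemma maximal_ideal_avoiding_powers_prime:
  assumes x: "x \<in> carrier R" and M: "ideal M R" and avoid: "\<And>n::nat. x [^] n \<notin> M"
    and max: "\<And>I. ideal I R \<Longrightarrow> M \<subseteq> I \<Longrightarrow> (\<forall>n::nat. x [^] n \<notin> I) \<Longrightarrow> I = M"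
  shows "nc_prime_ideal R M"
  unfolding nc_prime_ideal_def
proof (intro conjI allI impI)
  interpret M: ideal M R by (rule M)
  show "ideal M R" "M \<noteq> carrier R"
    using M avoid[of 0] by auto
  have power_in_sum: "\<exists>(n::nat) a m. a \<in> A \<and> m \<in> M \<and> x [^] n = a \<oplus> m"
    if A: "ideal A R" and not_sub: "\<not> A \<subseteq> M" for A
  proof -
    have "M \<subseteq> A <+>\<^bsub>R\<^esub> M"
    proof
      fix m assume "m \<in> M"
      moreover from this have "m = \<zero> \<oplus> m"
        by simp
      ultimately show "m \<in> A <+>\<^bsub>R\<^esub> M"
        using additive_subgroup.zero_closed[OF ideal.axioms(1)[OF A]]
        by (force simp: set_add_def')
    qed
    moreover have "A <+>\<^bsub>R\<^esub> M \<noteq> M"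
    proof -
      obtain a where "a \<in> A" "a \<notin> M"
        using not_sub by blast
      moreover from this have "a = a \<oplus> \<zero>"
        using ideal.Icarr[OF A] by simp
      ultimately show ?thesis
        using M.zero_closed by (force simp: set_add_def')
    qed
    ultimately obtain n :: nat where "x [^] n \<in> A <+>\<^bsub>R\<^esub> M"
      using max[OF add_ideals[OF A M]] by blast
    then show ?thesis
      by (auto simp: set_add_def')
  qed
  fix A B assume A: "ideal A R" and B: "ideal B R" and AB: "ideal_prod R A B \<subseteq> M"
  show "A \<subseteq> M \<or> B \<subseteq> M"
  proof (rule ccontr)
    assume "\<not> (A \<subseteq> M \<or> B \<subseteq> M)"
    then have "\<not> A \<subseteq> M" "\<not> B \<subseteq> M"
      by simp_all
    obtain n :: nat and a m where a: "a \<in> A" "m \<in> M" "x [^] n = a \<oplus> m"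
      using power_in_sum[OF A \<open>\<not> A \<subseteq> M\<close>] by (elim exE conjE)
    obtain k :: nat and b m' where b: "b \<in> B" "m' \<in> M" "x [^] k = b \<oplus> m'"
      using power_in_sum[OF B \<open>\<not> B \<subseteq> M\<close>] by (elim exE conjE)
    have carr: "a \<in> carrier R" "b \<in> carrier R" "m \<in> carrier R" "m' \<in> carrier R"
      using ideal.Icarr[OF A a(1)] ideal.Icarr[OF B b(1)] M.Icarr a(2) b(2) by auto
    have "x [^] (n + k) = a \<otimes> b \<oplus> (m \<otimes> b \<oplus> (a \<otimes> m' \<oplus> m \<otimes> m'))"
      using x a b carr by (simp add: nat_pow_mult[symmetric] l_distr r_distr a_assoc)
    moreover have "a \<otimes> b \<in> M"
      using AB ideal_prod.prod[OF a(1) b(1)] by blast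
    moreover have "a \<otimes> m' \<in> M" "m \<otimes> b \<in> M" "m \<otimes> m' \<in> M"
      using M.I_l_closed[OF b(2) carr(1)] M.I_r_closed[OF a(2) carr(2)]
        M.I_l_closed[OF b(2) carr(3)] by auto
    ultimately have "x [^] (n + k) \<in> M"
      by simp
    then show False
      using avoid by blast
  qed
qed

lemma prime_radical_nil:
  assumes "x \<in> prime_radical R"
  shows "\<exists>n::nat. x [^] n = \<zero>"
proof (rule ccontr)
  assume no_power_zero: "\<nexists>n::nat. x [^] n = \<zero>"
  have x: "x \<in> carrier R"
    using assms by (simp add: prime_radical_def)
  let ?A = "{I. ideal I R \<and> (\<forall>n::nat. x [^] n \<notin> I)}"
  have "\<exists>M\<in>?A. \<forall>I\<in>?A. M \<subseteq> I \<longrightarrow> I = M"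
  proof (rule subset_Zorn_nonempty)
    show "?A \<noteq> {}"
      using no_power_zero zeroideal by blast
    show "\<Union>C \<in> ?A" if "C \<noteq> {}" "subset.chain ?A C" for C
    proof -
      have "subset.chain {I. ideal I R} C"
        using that(2) by (auto simp: pred_on.chain_def)
      from chain_Union_is_ideal[OF this] have "ideal (\<Union>C) R"
        using that(1) by simp
      moreover have "\<forall>n::nat. x [^] n \<notin> \<Union>C"
        using that(2) by (auto simp: pred_on.chain_def)
      ultimately show ?thesis
        by blast
    qed
  qed
  then obtain M where M: "ideal M R" "\<And>n::nat. x [^] n \<notin> M"
    and max: "\<forall>I\<in>?A. M \<subseteq> I \<longrightarrow> I = M"
    by auto
  have "nc_prime_ideal R M"
    using maximal_ideal_avoiding_powers_prime[OF x M] max by blast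
  then have "x [^] (1::nat) \<in> M"
    using assms x by (simp add: prime_radical_def)
  then show False
    using M(2) by blast
qed

lemma rcos_eq_iff:
  assumes K: "ideal K R" and x: "x \<in> carrier R" and y: "y \<in> carrier R"
  shows "K +> x = K +> y \<longleftrightarrow> x \<ominus> y \<in> K"
proof -
  interpret K: ideal K R by (rule K)
  have "K +> x = K +> y \<longleftrightarrow> x \<in> K +> y"
    using K.a_rcos_self[OF x] K.a_repr_independence'[OF _ y] by blast
  also have "\<dots> \<longleftrightarrow> x \<ominus> y \<in> K"
    using K.a_rcos_module_minus[OF ring_axioms y x] .
  finally show ?thesis .
qed

lemma quot_carrier: "ideal K R \<Longrightarrow> carrier (R Quot K) = (+>) K ` carrier R"
  by (auto simp: FactRing_def A_RCOSETS_def')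

lemma quot_zero_iff:
  assumes K: "ideal K R" and x: "x \<in> carrier R"
  shows "K +> x = \<zero>\<^bsub>R Quot K\<^esub> \<longleftrightarrow> x \<in> K"
  using rcos_eq_iff[OF K x zero_closed] x
    a_rcos_zero[OF K additive_subgroup.zero_closed[OF ideal.axioms(1)[OF K]]]
  by (simp add: FactRing_def minus_zero_right)

end

context cring
begin

lemma idempotent_iteration_step:
  assumes t: "t \<in> carrier R"
  defines "t' \<equiv> (t \<otimes> t) \<otimes> (\<one> \<oplus> \<one> \<oplus> \<one> \<ominus> (t \<oplus> t))" and "d \<equiv> t \<otimes> t \<ominus> t"
  shows "t' \<ominus> t = d \<otimes> (\<one> \<ominus> (t \<oplus> t))"
    and "t' \<otimes> t' \<ominus> t' = (d \<otimes> d) \<otimes> \<ominus> ((\<one> \<oplus> \<one> \<oplus> \<one> \<ominus> (t \<oplus> t)) \<otimes> (\<one> \<oplus> t \<oplus> t))"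
proof -
  show "t' \<ominus> t = d \<otimes> (\<one> \<ominus> (t \<oplus> t))"
    using t unfolding t'_def d_def by algebra
  have "t' \<in> carrier R"
    using t by (simp add: t'_def)
  then have "t' \<otimes> t' \<ominus> t' = t' \<otimes> (t' \<ominus> \<one>)"
    by algebra
  moreover have "t' \<ominus> \<one> = \<ominus> ((\<one> \<ominus> t) \<otimes> (\<one> \<ominus> t) \<otimes> (\<one> \<oplus> t \<oplus> t))"
    using t unfolding t'_def by algebra
  moreover have "d \<otimes> d = (t \<otimes> t) \<otimes> ((\<one> \<ominus> t) \<otimes> (\<one> \<ominus> t))"
    using t unfolding d_def by algebra
  ultimately show "t' \<otimes> t' \<ominus> t' = (d \<otimes> d) \<otimes> \<ominus> ((\<one> \<oplus> \<one> \<oplus> \<one> \<ominus> (t \<oplus> t)) \<otimes> (\<one> \<oplus> t \<oplus> t))"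
    using t by (simp add: t'_def r_minus m_ac)
qed

lemma nat_pow_eq_zero_mono:
  assumes "x \<in> carrier R" "x [^] (n::nat) = \<zero>" "n \<le> m"
  shows "x [^] m = \<zero>"
proof -
  have "x [^] m = x [^] n \<otimes> x [^] (m - n)"
    using assms(1,3) nat_pow_mult[of x n "m - n"] by simp
  then show ?thesis
    using assms by simp
qed

lemma idempotent_lift_nilpotent_defect:
  assumes a: "a \<in> carrier R" and nil: "(a \<otimes> a \<ominus> a) [^] (n::nat) = \<zero>"
  shows "\<exists>e\<in>carrier R. \<exists>c\<in>carrier R. e \<otimes> e = e \<and> e \<ominus> a = (a \<otimes> a \<ominus> a) \<otimes> c"
proof -
  define x where "x = a \<otimes> a \<ominus> a"
  have x: "x \<in> carrier R"
    using a by (simp add: x_def)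
  have "\<exists>t\<in>carrier R. \<exists>c\<in>carrier R. \<exists>w\<in>carrier R.
          t \<ominus> a = x \<otimes> c \<and> t \<otimes> t \<ominus> t = x [^] ((2::nat) ^ k) \<otimes> w" for k
  proof (induction k)
    case 0
    show ?case
      using a x by (intro bexI[of _ a] bexI[of _ \<zero>] bexI[of _ \<one>]) (simp_all add: x_def minus_self)
  next
    case (Suc k)
    then obtain t c w where t: "t \<in> carrier R" "c \<in> carrier R" "w \<in> carrier R"
      and shift: "t \<ominus> a = x \<otimes> c" and defect: "t \<otimes> t \<ominus> t = x [^] ((2::nat) ^ k) \<otimes> w"
      by blast
    define t' where "t' = (t \<otimes> t) \<otimes> (\<one> \<oplus> \<one> \<oplus> \<one> \<ominus> (t \<oplus> t))"
    obtain j where j: "(2::nat) ^ k = Suc j"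
      using not0_implies_Suc by fastforce
    have "t' \<ominus> a = (t' \<ominus> t) \<oplus> (t \<ominus> a)"
      using t a by (simp add: t'_def minus_add_minus)
    also have "\<dots> = x \<otimes> ((x [^] j \<otimes> w) \<otimes> (\<one> \<ominus> (t \<oplus> t)) \<oplus> c)"
      using t x idempotent_iteration_step(1)[OF t(1)]
      by (simp add: t'_def defect shift j nat_pow_Suc2 m_ac r_distr)
    finally have "t' \<ominus> a = x \<otimes> ((x [^] j \<otimes> w) \<otimes> (\<one> \<ominus> (t \<oplus> t)) \<oplus> c)" .
    moreover have "t' \<otimes> t' \<ominus> t' = x [^] ((2::nat) ^ Suc k) \<otimes>
        ((w \<otimes> w) \<otimes> \<ominus> ((\<one> \<oplus> \<one> \<oplus> \<one> \<ominus> (t \<oplus> t)) \<otimes> (\<one> \<oplus> t \<oplus> t)))"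
      using t x idempotent_iteration_step(2)[OF t(1)]
      by (simp add: t'_def defect power_Suc mult_2 nat_pow_mult[symmetric] m_ac)
    moreover have "t' \<in> carrier R" "(x [^] j \<otimes> w) \<otimes> (\<one> \<ominus> (t \<oplus> t)) \<oplus> c \<in> carrier R"
      "(w \<otimes> w) \<otimes> \<ominus> ((\<one> \<oplus> \<one> \<oplus> \<one> \<ominus> (t \<oplus> t)) \<otimes> (\<one> \<oplus> t \<oplus> t)) \<in> carrier R"
      using t x by (simp_all add: t'_def)
    ultimately show ?case
      by blast
  qed
  then obtain e c w where "e \<in> carrier R" "c \<in> carrier R" "w \<in> carrier R"
    and "e \<ominus> a = x \<otimes> c" "e \<otimes> e \<ominus> e = x [^] ((2::nat) ^ n) \<otimes> w"
    by blast
  moreover have "x [^] ((2::nat) ^ n) = \<zero>"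
    using nat_pow_eq_zero_mono[OF x nil[folded x_def]] by (simp add: less_imp_le)
  ultimately show ?thesis
    unfolding x_def by (metis minus_eq_zero_iff l_null m_closed)
qed

end

context ring
begin

definition double_centralizer :: "'a \<Rightarrow> 'a set" where
  "double_centralizer a = {y \<in> carrier R. \<forall>z\<in>carrier R. z \<otimes> a = a \<otimes> z \<longrightarrow> y \<otimes> z = z \<otimes> y}"

lemma double_centralizer_subcring:
  assumes a: "a \<in> carrier R"
  shows "subcring (double_centralizer a) R"
proof (rule subcringI)
  show "subring (double_centralizer a) R"
  proof (rule subringI)
    show "double_centralizer a \<subseteq> carrier R" "\<one> \<in> double_centralizer a"
      by (auto simp: double_centralizer_def)
    show "\<ominus> y \<in> double_centralizer a" if "y \<in> double_centralizer a" for y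
      using that by (auto simp: double_centralizer_def l_minus r_minus)
    show "y \<oplus> y' \<in> double_centralizer a"
      if "y \<in> double_centralizer a" "y' \<in> double_centralizer a" for y y'
      using that by (auto simp: double_centralizer_def l_distr r_distr)
    show "y \<otimes> y' \<in> double_centralizer a"
      if "y \<in> double_centralizer a" "y' \<in> double_centralizer a" for y y'
      using that by (auto simp: double_centralizer_def m_assoc) (metis m_assoc)
  qed
  show "y \<otimes> y' = y' \<otimes> y" if "y \<in> double_centralizer a" "y' \<in> double_centralizer a" for y y'
  proof -
    have "y' \<otimes> a = a \<otimes> y'"
      using that(2) a by (auto simp: double_centralizer_def)
    then show ?thesis
      using that by (auto simp: double_centralizer_def)
  qed
qed

lemma subring_a_minus:
  assumes H: "subring H R" and "x \<in> H" "y \<in> H"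
  shows "x \<ominus>\<^bsub>R\<lparr>carrier := H\<rparr>\<^esub> y = x \<ominus> y"
proof -
  interpret H: ring "R\<lparr>carrier := H\<rparr>"
    using subring_is_ring[OF H] .
  have "y \<oplus> \<ominus>\<^bsub>R\<lparr>carrier := H\<rparr>\<^esub> y = \<zero>"
    using H.r_neg[of y] assms(3) by simp
  moreover have "\<ominus>\<^bsub>R\<lparr>carrier := H\<rparr>\<^esub> y \<in> carrier R" "y \<in> carrier R"
    using H.add.inv_closed[of y] assms(3) subringE(1)[OF H] by auto
  ultimately have "\<ominus>\<^bsub>R\<lparr>carrier := H\<rparr>\<^esub> y = \<ominus> y"
    by (metis add.m_comm minus_equality)
  then show ?thesis
    by (simp add: a_minus_def)
qed

text \<open>The iteration is run in the double centralizer of \<open>a\<close>, a commutative subring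
  containing \<open>a\<close>.\<close>

lemma idempotent_lift_nil_ideal:
  assumes I: "ideal I R" and nil: "\<And>y. y \<in> I \<Longrightarrow> \<exists>n::nat. y [^] n = \<zero>"
    and a: "a \<in> carrier R" and defect: "a \<otimes> a \<ominus> a \<in> I"
  shows "\<exists>e\<in>carrier R. e \<otimes> e = e \<and> e \<ominus> a \<in> I"
proof -
  let ?C = "double_centralizer a"
  have C: "subring ?C R" and C_carr: "?C \<subseteq> carrier R"
    using double_centralizer_subcring[OF a] by (auto simp: subcring_def subringE(1))
  interpret C: cring "R\<lparr>carrier := ?C\<rparr>"
    using double_centralizer_subcring[OF a] subcring_iff[OF C_carr] by blast
  have a_C: "a \<in> ?C"
    using a by (auto simp: double_centralizer_def)
  have defect_C: "a \<otimes> a \<ominus>\<^bsub>R\<lparr>carrier := ?C\<rparr>\<^esub> a = a \<otimes> a \<ominus> a"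
    using subring_a_minus[OF C _ a_C] subringE(6)[OF C a_C a_C] by simp
  obtain n :: nat where "(a \<otimes> a \<ominus> a) [^] n = \<zero>"
    using nil[OF defect] by blast
  then have "(a \<otimes> a \<ominus> a) [^]\<^bsub>R\<lparr>carrier := ?C\<rparr>\<^esub> n = \<zero>"
    by (metis nat_pow_consistent)
  then obtain e c where e: "e \<in> ?C" "c \<in> ?C" "e \<otimes> e = e"
    and shift: "e \<ominus>\<^bsub>R\<lparr>carrier := ?C\<rparr>\<^esub> a = (a \<otimes> a \<ominus> a) \<otimes> c"
    using C.idempotent_lift_nilpotent_defect[of a n] a_C defect_C by auto
  have "e \<ominus> a = (a \<otimes> a \<ominus> a) \<otimes> c"
    using shift subring_a_minus[OF C e(1) a_C] by simp
  also have "\<dots> \<in> I"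
    using ideal.I_r_closed[OF I defect] e(2) C_carr by blast
  finally show ?thesis
    using e C_carr by blast
qed

end

locale involution_ring = ring R for R (structure) +
  fixes s :: "'a \<Rightarrow> 'a"
  assumes star_closed [simp]: "a \<in> carrier R \<Longrightarrow> s a \<in> carrier R"
    and star_add: "a \<in> carrier R \<Longrightarrow> b \<in> carrier R \<Longrightarrow> s (a \<oplus> b) = s a \<oplus> s b"
    and star_mult: "a \<in> carrier R \<Longrightarrow> b \<in> carrier R \<Longrightarrow> s (a \<otimes> b) = s b \<otimes> s a"
    and star_star [simp]: "a \<in> carrier R \<Longrightarrow> s (s a) = a"

lemma star_ring_imp_involution_ring: "star_ring R s \<Longrightarrow> involution_ring R s"
  unfolding star_ring_def involution_ring_def involution_ring_axioms_def by simp

context involution_ring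
begin

lemma star_zero [simp]: "s \<zero> = \<zero>"
  using star_add[of \<zero> \<zero>] add.l_cancel_one[of "s \<zero>" "s \<zero>"] by simp

lemma star_a_inv: "a \<in> carrier R \<Longrightarrow> s (\<ominus> a) = \<ominus> s a"
  using star_add[of "\<ominus> a" a] by (simp add: l_neg minus_equality)

lemma star_minus: "a \<in> carrier R \<Longrightarrow> b \<in> carrier R \<Longrightarrow> s (a \<ominus> b) = s a \<ominus> s b"
  by (simp add: a_minus_def star_add star_a_inv)

lemma star_one [simp]: "s \<one> = \<one>"
  using star_mult[of "s \<one>" \<one>] by simp

lemma star_preimage_ideal:
  assumes I: "ideal I R"
  shows "ideal {x \<in> carrier R. s x \<in> I} R"
proof -
  interpret I: ideal I R by (rule I)
  show ?thesis
  proof (rule idealI)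
    show "ring R" ..
    show "subgroup {x \<in> carrier R. s x \<in> I} (add_monoid R)"
      by (rule add.subgroupI) (auto simp: star_add star_a_inv simp flip: a_inv_def)
  qed (auto simp: star_mult intro: I.I_l_closed I.I_r_closed)
qed

lemma star_preimage_prime:
  assumes Q: "nc_prime_ideal R Q"
  shows "nc_prime_ideal R {x \<in> carrier R. s x \<in> Q}"
  unfolding nc_prime_ideal_def
proof (intro conjI allI impI)
  let ?s_pre = "\<lambda>A. {x \<in> carrier R. s x \<in> A}"
  have Q_ideal: "ideal Q R" and Q_proper: "Q \<noteq> carrier R"
    and Q_prime: "\<And>A B. ideal A R \<Longrightarrow> ideal B R \<Longrightarrow> ideal_prod R A B \<subseteq> Q \<Longrightarrow> A \<subseteq> Q \<or> B \<subseteq> Q"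
    using Q by (auto simp: nc_prime_ideal_def)
  have star_pre_back: "A \<subseteq> ?s_pre B" if pre: "?s_pre A \<subseteq> B" and A: "A \<subseteq> carrier R" for A B
  proof
    fix a assume a: "a \<in> A"
    then have "s a \<in> ?s_pre A"
      using A by auto
    then show "a \<in> ?s_pre B"
      using pre A a by auto
  qed
  show "ideal (?s_pre Q) R"
    by (rule star_preimage_ideal[OF Q_ideal])
  show "?s_pre Q \<noteq> carrier R"
  proof
    assume everything: "?s_pre Q = carrier R"
    have "carrier R \<subseteq> Q"
    proof
      fix x assume x: "x \<in> carrier R"
      then have "s x \<in> ?s_pre Q"
        using everything by simp
      then show "x \<in> Q"
        using x by simp
    qed
    then show False
      using Q_proper additive_subgroup.a_subset[OF ideal.axioms(1)[OF Q_ideal]] by blast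
  qed
  fix A B assume A: "ideal A R" and B: "ideal B R" and AB: "ideal_prod R A B \<subseteq> ?s_pre Q"
  text \<open>The involution reverses products, so \<open>B\<^sup>* A\<^sup>* \<subseteq> Q\<close>.\<close>
  have "ideal_prod R (?s_pre B) (?s_pre A) \<subseteq> Q"
  proof
    fix z assume "z \<in> ideal_prod R (?s_pre B) (?s_pre A)"
    then show "z \<in> Q"
    proof (induction z rule: ideal_prod.induct)
      case (prod b a)
      then have a: "a \<in> carrier R" "s a \<in> A" and b: "b \<in> carrier R" "s b \<in> B"
        by simp_all
      have "s a \<otimes> s b \<in> ?s_pre Q"
        using AB ideal_prod.prod[OF a(2) b(2)] by blast
      then show ?case
        using a b by (simp add: star_mult)
    next
      case (sum z1 z2)
      then show ?case
        by (simp add: additive_subgroup.a_closed[OF ideal.axioms(1)[OF Q_ideal]])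
    qed
  qed
  then have "?s_pre B \<subseteq> Q \<or> ?s_pre A \<subseteq> Q"
    using Q_prime[OF star_preimage_ideal[OF B] star_preimage_ideal[OF A]] by blast
  then show "A \<subseteq> ?s_pre Q \<or> B \<subseteq> ?s_pre Q"
    using star_pre_back[of A Q] star_pre_back[of B Q]
      additive_subgroup.a_subset[OF ideal.axioms(1)[OF A]]
      additive_subgroup.a_subset[OF ideal.axioms(1)[OF B]] by blast
qed

lemma star_prime_radical: "x \<in> prime_radical R \<Longrightarrow> s x \<in> prime_radical R"
  using star_preimage_prime by (auto simp: prime_radical_def)

lemma quot_star_rcos:
  assumes K: "ideal K R" and K_star: "\<And>y. y \<in> K \<Longrightarrow> s y \<in> K" and x: "x \<in> carrier R"
  shows "quot_star R s K (K +> x) = K +> s x"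
proof -
  interpret K: ideal K R by (rule K)
  define y where "y = (SOME y. y \<in> K +> x)"
  have "y \<in> K +> x"
    unfolding y_def using K.a_rcos_self[OF x] by (rule someI)
  then have y_carr: "y \<in> carrier R" and "K +> y = K +> x"
    using K.a_elemrcos_carrier[OF x] K.a_repr_independence'[OF _ x] by auto
  then have "s y \<ominus> s x \<in> K"
    using K_star rcos_eq_iff[OF K y_carr x] x by (metis star_minus)
  then show ?thesis
    using rcos_eq_iff[OF K] x y_carr by (simp add: quot_star_def y_def)
qed

lemma idempotent_corner_zero:
  assumes selfadjoint: "\<And>e. e \<in> carrier R \<Longrightarrow> e \<otimes> e = e \<Longrightarrow> s e = e"
    and g: "g \<in> carrier R" "g \<otimes> g = g" and x: "x \<in> carrier R"
  shows "g \<otimes> x \<otimes> (\<one> \<ominus> g) = \<zero>"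
proof -
  define h where "h = \<one> \<ominus> g"
  define y where "y = g \<otimes> x \<otimes> h"
  have h: "h \<in> carrier R" "g \<otimes> h = \<zero>" "h \<otimes> g = \<zero>"
    using g by (simp_all add: h_def r_distr_minus l_distr_minus minus_self)
  have y: "y \<in> carrier R" "g \<otimes> y = y" "y \<otimes> g = \<zero>"
    using g x h by (simp_all add: y_def m_assoc[symmetric]) (simp add: m_assoc)
  have "y \<otimes> y = \<zero>"
    using y(1,3) g x h by (simp add: y_def m_assoc[symmetric])
  then have "(g \<oplus> y) \<otimes> (g \<oplus> y) = g \<oplus> y"
    using g y by (simp add: l_distr r_distr)
  then have "g \<oplus> s y = g \<oplus> y"
    using selfadjoint[of "g \<oplus> y"] selfadjoint[OF g] g y by (simp add: star_add)
  then have "s y = y"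
    using g y by simp
  moreover have "s y = h \<otimes> (s x \<otimes> g)"
    using g x h selfadjoint[OF g] by (simp add: y_def star_mult h_def star_minus)
  ultimately have "y = g \<otimes> (h \<otimes> (s x \<otimes> g))"
    using y(2) by simp
  also have "\<dots> = \<zero>"
    using g x h by (simp add: m_assoc[symmetric])
  finally show ?thesis
    by (simp add: y_def h_def)
qed

lemma abelian_if_idempotents_selfadjoint:
  assumes selfadjoint: "\<And>e. e \<in> carrier R \<Longrightarrow> e \<otimes> e = e \<Longrightarrow> s e = e"
  shows "abelian_ring R"
  unfolding abelian_ring_def
proof (intro ballI impI)
  fix g x assume g: "g \<in> carrier R" "g \<otimes> g = g" and x: "x \<in> carrier R"
  have "g \<otimes> x \<otimes> (\<one> \<ominus> g) = \<zero>"
    using idempotent_corner_zero[OF selfadjoint g x] .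
  then have "g \<otimes> x = g \<otimes> x \<otimes> g"
    using g x by (simp add: r_distr_minus minus_eq_zero_iff)
  moreover have "(\<one> \<ominus> g) \<otimes> x \<otimes> (\<one> \<ominus> (\<one> \<ominus> g)) = \<zero>"
    using idempotent_corner_zero[OF selfadjoint _ one_minus_idempotent[OF g] x] g by simp
  then have "x \<otimes> g = g \<otimes> x \<otimes> g"
    using g x by (simp add: minus_minus_cancel l_distr_minus minus_eq_zero_iff)
  ultimately show "g \<otimes> x = x \<otimes> g"
    by simp
qed

lemma strongly_J_star_clean_idempotent_selfadjoint:
  assumes clean: "strongly_J_star_clean R s" and g: "g \<in> carrier R" "g \<otimes> g = g"
  shows "s g = g"
proof -
  obtain e u where proj: "is_projection R s e" and u: "u \<in> jacobson_radical R"
    and decomp: "g = e \<oplus> u" and comm: "g \<otimes> e = e \<otimes> g"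
    using clean g(1) unfolding strongly_J_star_clean_def by blast
  have e: "e \<in> carrier R" "e \<otimes> e = e" "s e = e"
    using proj by (simp_all add: is_projection_def)
  have "g \<ominus> e = u"
    using e(1) u jacobson_radical_subset decomp by (auto simp: add_minus_cancel_left)
  then have "g = e"
    using idempotents_eq_if_diff_in_jacobson_radical[OF g e(1,2) comm] u by simp
  then show ?thesis
    using e(3) by simp
qed

lemma strongly_J_star_clean_abelian: "strongly_J_star_clean R s \<Longrightarrow> abelian_ring R"
  using abelian_if_idempotents_selfadjoint strongly_J_star_clean_idempotent_selfadjoint by blast

lemma strongly_J_star_clean_quotient:
  assumes clean: "strongly_J_star_clean R s"
    and K: "ideal K R" and K_star: "\<And>y. y \<in> K \<Longrightarrow> s y \<in> K"
  shows "strongly_J_star_clean (R Quot K) (quot_star R s K)"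
  unfolding strongly_J_star_clean_def
proof
  interpret quot: ring_hom_ring R "R Quot K" "(+>) K"
    using ideal.rcos_ring_hom_ring[OF K] .
  fix A assume "A \<in> carrier (R Quot K)"
  then obtain a where a: "a \<in> carrier R" "A = K +> a"
    using quot_carrier[OF K] by blast
  obtain e u where proj: "is_projection R s e" and u: "u \<in> jacobson_radical R"
    and decomp: "a = e \<oplus> u" and comm: "a \<otimes> e = e \<otimes> a"
    using clean a(1) unfolding strongly_J_star_clean_def by blast
  have e: "e \<in> carrier R" "e \<otimes> e = e" "s e = e"
    using proj by (simp_all add: is_projection_def)
  have "is_projection (R Quot K) (quot_star R s K) (K +> e)"
    using e quot.hom_mult[of e e] quot_star_rcos[OF K K_star e(1)] by (simp add: is_projection_def)
  moreover have "K +> u \<in> jacobson_radical (R Quot K)"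
    using quot.jacobson_radical_image[OF quot_carrier[OF K, symmetric] u] .
  moreover have "A = (K +> e) \<oplus>\<^bsub>R Quot K\<^esub> (K +> u)"
    using a decomp e(1) u jacobson_radical_subset by auto
  moreover have "A \<otimes>\<^bsub>R Quot K\<^esub> (K +> e) = (K +> e) \<otimes>\<^bsub>R Quot K\<^esub> A"
    using a e(1) comm quot.hom_mult[of a e] quot.hom_mult[of e a] by simp
  ultimately show "\<exists>E U. is_projection (R Quot K) (quot_star R s K) E \<and>
      U \<in> jacobson_radical (R Quot K) \<and> A = E \<oplus>\<^bsub>R Quot K\<^esub> U \<and> A \<otimes>\<^bsub>R Quot K\<^esub> E = E \<otimes>\<^bsub>R Quot K\<^esub> A"
    by (intro exI conjI)
qed

lemma strongly_J_star_clean_lift: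
  assumes abelian: "abelian_ring R"
    and K: "ideal K R" and K_star: "\<And>y. y \<in> K \<Longrightarrow> s y \<in> K"
    and nil: "\<And>y. y \<in> K \<Longrightarrow> \<exists>n::nat. y [^] n = \<zero>"
    and clean: "strongly_J_star_clean (R Quot K) (quot_star R s K)"
  shows "strongly_J_star_clean R s"
  unfolding strongly_J_star_clean_def
proof
  interpret quot: ring_hom_ring R "R Quot K" "(+>) K"
    using ideal.rcos_ring_hom_ring[OF K] .
  have surj: "(+>) K ` carrier R = carrier (R Quot K)"
    using quot_carrier[OF K] by simp
  have K_J: "K \<subseteq> jacobson_radical R"
    using nil_ideal_subset_jacobson_radical[OF K nil] .
  have central: "\<And>g x. g \<in> carrier R \<Longrightarrow> g \<otimes> g = g \<Longrightarrow> x \<in> carrier R \<Longrightarrow> g \<otimes> x = x \<otimes> g"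
    using abelian unfolding abelian_ring_def by blast
  fix a assume a: "a \<in> carrier R"
  obtain E U where proj: "is_projection (R Quot K) (quot_star R s K) E"
    and U: "U \<in> jacobson_radical (R Quot K)" and decomp: "K +> a = E \<oplus>\<^bsub>R Quot K\<^esub> U"
    using clean quot.hom_closed[OF a] unfolding strongly_J_star_clean_def by blast
  have E: "E \<in> carrier (R Quot K)" "E \<otimes>\<^bsub>R Quot K\<^esub> E = E" "quot_star R s K E = E"
    using proj by (simp_all add: is_projection_def)
  obtain c where c: "c \<in> carrier R" "E = K +> c"
    using E(1) surj by blast
  have "c \<otimes> c \<ominus> c \<in> K"
    using E(2) c rcos_eq_iff[OF K, of "c \<otimes> c" c] by simp
  then obtain e where e: "e \<in> carrier R" "e \<otimes> e = e" "e \<ominus> c \<in> K"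
    using idempotent_lift_nil_ideal[OF K nil c(1)] by blast
  have eE: "K +> e = E"
    using rcos_eq_iff[OF K e(1) c(1)] e(3) c(2) by simp
  text \<open>\<open>e\<^sup>*\<close> is an idempotent commuting with \<open>e\<close> and congruent to it modulo \<open>K \<subseteq> J(R)\<close>.\<close>
  have "K +> s e = K +> e"
    using quot_star_rcos[OF K K_star e(1)] eE E(3) by simp
  then have "s e \<ominus> e \<in> jacobson_radical R"
    using rcos_eq_iff[OF K star_closed[OF e(1)] e(1)] K_J by blast
  moreover have "s e \<otimes> s e = s e"
    using e by (simp flip: star_mult)
  ultimately have se: "s e = e"
    using idempotents_eq_if_diff_in_jacobson_radical[OF star_closed[OF e(1)] _ e(1,2)]
      central[OF e(1,2) star_closed[OF e(1)]] by simp
  define u where "u = a \<ominus> e"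
  have u_carr: "u \<in> carrier R"
    using a e(1) by (simp add: u_def)
  have "K +> u = (E \<oplus>\<^bsub>R Quot K\<^esub> U) \<ominus>\<^bsub>R Quot K\<^esub> E"
    using a e(1) decomp eE by (simp add: u_def quot.hom_minus)
  also have "\<dots> = U"
    using E(1) U quot.S.add_minus_cancel_left quot.S.jacobson_radical_subset by blast
  finally have "u \<in> jacobson_radical R"
    using quot.jacobson_radical_preimage[OF surj _ u_carr] U K_J quot_zero_iff[OF K] by auto
  moreover have "a = e \<oplus> u"
    using a e(1) by (simp add: u_def a_minus_def add.m_comm[of a "\<ominus> e"] r_neg2)
  moreover have "is_projection R s e"
    using e se by (simp add: is_projection_def)
  moreover have "a \<otimes> e = e \<otimes> a"
    using central[OF e(1,2) a] by simp
  ultimately show "\<exists>e u. is_projection R s e \<and> u \<in> jacobson_radical R \<and> a = e \<oplus> u \<and> a \<otimes> e = e \<otimes> a"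
    by blast
qed

end

theorem corollary3p9:
  fixes R :: "('a, 'b) ring_scheme" and s :: "'a \<Rightarrow> 'a"
  assumes "star_ring R s"
  shows "strongly_J_star_clean R s \<longleftrightarrow>
           abelian_ring R \<and>
           strongly_J_star_clean (R Quot (prime_radical R)) (quot_star R s (prime_radical R))"
proof -
  interpret involution_ring R s
    using star_ring_imp_involution_ring[OF assms] .
  note P = prime_radical_ideal and P_star = star_prime_radical and P_nil = prime_radical_nil
  show ?thesis
    using strongly_J_star_clean_abelian strongly_J_star_clean_quotient[OF _ P P_star]
      strongly_J_star_clean_lift[OF _ P P_star P_nil] by blast
qed

end
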